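(* Let $f:\mathbb{N}\to\mathbb{R}$ with $f(1)=1$. Assume there exist an integer $N\geq2$, $C>0$ and $\gamma\in\mathbb{R}$ such that $f(n)=0$ for all $2\leq n\leq N$ and $|f(n)|\leq Cn^\gamma$ for all $n>N$. Then $$|f^{-1}(n)|\leq n^{\gamma+\varsigma}, \quad n>N,$$ where $\varsigma>1$ is the unique root of $\zeta(s)=\frac{1}{C}+\sum_{m=1}^{N} m^{-s}$.
   Context: $f^{-1}$ denotes the Dirichlet inverse of $f$: the arithmetic function with $\sum_{d\mid n} f(n/d) f^{-1}(d)=\varepsilon(n)$ for all $n$, where $\varepsilon(1)=1$ and $\varepsilon(n)=0$ for $n\ge2$. $\zeta$ is the Riemann zeta function. *)

theory Defs
  imports "HOL-Analysis.Analysis"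
begin

text \<open>Arithmetic functions are modelled as functions nat => real; only the values
  at n >= 1 are meaningful (the value at 0 is ignored).\<close>

definition dirichlet_inverse :: "(nat \<Rightarrow> real) \<Rightarrow> (nat \<Rightarrow> real) \<Rightarrow> bool" where
  "dirichlet_inverse f g \<longleftrightarrow>
     (\<forall>n\<ge>1. (\<Sum>d | d dvd n. f (n div d) * g d) = (if n = 1 then 1 else 0))"

definition zeta_real :: "real \<Rightarrow> real" where
  "zeta_real s = (\<Sum>n. 1 / (real (Suc n) powr s))"

end

theory Submission
  imports Defs
begin

text \<open>The Dirichlet inverse satisfies g(n) = -\<Sum> f(k) g(n/k) over the divisors k > 1 of n,
  and since f vanishes on [2, N] only divisors k > N contribute. Inductively,
  |f(k) g(n/k)| \<le> C k^\<gamma> (n/k)^(\<gamma>+\<sigma>) = C n^(\<gamma>+\<sigma>) k^(-\<sigma>), so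
  |g(n)| \<le> C n^(\<gamma>+\<sigma>) (\<Sum>k>N. k^(-\<sigma>)), and the last factor is at most 1 as soon as
  the tail (\<Sum>k>N. k^(-\<sigma>)) of \<zeta>(\<sigma>) is at most 1/C. That tail decreases strictly and
  continuously from \<infinity> (at \<sigma> = 1) to 0, which gives the unique root \<sigma>.\<close>

definition tail_zeta :: "nat \<Rightarrow> real \<Rightarrow> real" where
  "tail_zeta N s = (\<Sum>n. real (n + Suc N) powr (- s))"

lemma summable_tail_zeta: "s > 1 \<Longrightarrow> summable (\<lambda>n. real (n + Suc N) powr (- s))"
proof -
  assume "s > 1"
  hence "summable (\<lambda>n. real n powr (- s))" by (subst summable_real_powr_iff) simp
  thus ?thesis by (subst summable_iff_shift)
qed

lemma zeta_real_split_tail: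
  assumes "s > 1"
  shows "zeta_real s = (\<Sum>m=1..N. real m powr (- s)) + tail_zeta N s"
proof -
  have "summable (\<lambda>n. real (Suc n) powr (- s))"
    using summable_tail_zeta[OF assms, of 0] by simp
  from suminf_split_initial_segment[OF this, of N]
  show ?thesis
    unfolding zeta_real_def tail_zeta_def
    using sum_bounds_lt_plus1[of "\<lambda>m. real m powr (- s)" N]
    by (simp add: powr_minus_divide)
qed

lemma sum_le_tail_zeta:
  assumes "s > 1" "finite A" "A \<subseteq> {N<..}"
  shows "(\<Sum>k\<in>A. real k powr (- s)) \<le> tail_zeta N s"
proof -
  let ?B = "(\<lambda>k. k - Suc N) ` A"
  have "A = (\<lambda>m. m + Suc N) ` ?B"
    using assms(3) by (force simp: image_image)
  moreover have "inj_on (\<lambda>m. m + Suc N) ?B" by (simp add: inj_on_def)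
  ultimately have "(\<Sum>k\<in>A. real k powr (- s)) = (\<Sum>m\<in>?B. real (m + Suc N) powr (- s))"
    by (metis (no_types, lifting) sum.reindex_cong)
  also have "\<dots> \<le> tail_zeta N s"
    unfolding tail_zeta_def using summable_tail_zeta[OF assms(1)] assms(2)
    by (intro sum_le_suminf) auto
  finally show ?thesis .
qed

lemma tail_zeta_strict_antimono:
  assumes "N \<ge> 1" "1 < s" "s < t"
  shows "tail_zeta N t < tail_zeta N s"
proof -
  have "0 < (\<Sum>n. real (n + Suc N) powr (- s) - real (n + Suc N) powr (- t))"
  proof (rule suminf_pos)
    show "summable (\<lambda>n. real (n + Suc N) powr (- s) - real (n + Suc N) powr (- t))"
      using summable_tail_zeta[of s N] summable_tail_zeta[of t N] assms
      by (intro summable_diff) auto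
    show "0 < real (n + Suc N) powr (- s) - real (n + Suc N) powr (- t)" for n
      using assms by (simp add: powr_less_mono)
  qed
  also have "\<dots> = tail_zeta N s - tail_zeta N t"
    unfolding tail_zeta_def using summable_tail_zeta[of s N] summable_tail_zeta[of t N] assms
    by (subst suminf_diff) auto
  finally show ?thesis by simp
qed

lemma continuous_on_tail_zeta: "a > 1 \<Longrightarrow> continuous_on {a..} (tail_zeta N)"
proof -
  assume a: "a > 1"
  have "uniform_limit {a..} (\<lambda>k s. \<Sum>n<k. real (n + Suc N) powr (- s)) (tail_zeta N) sequentially"
    unfolding tail_zeta_def[abs_def]
  proof (rule Weierstrass_m_test)
    show "norm (real (n + Suc N) powr (- s)) \<le> real (n + Suc N) powr (- a)" if "s \<in> {a..}" for n s
      using that by (simp add: powr_mono)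
  qed (rule summable_tail_zeta[OF a])
  then show ?thesis
    by (rule uniform_limit_theorem[rotated]) (auto intro!: always_eventually continuous_intros)
qed

text \<open>Compare the terms with (N + 1)^(2 - b) n^(-2) and let b grow.\<close>
lemma tail_zeta_le_ex:
  assumes "N \<ge> 1" "c > 0"
  shows "\<exists>b>1. tail_zeta N b \<le> c"
proof -
  define Z where "Z = (\<Sum>n. real (Suc n) powr (- 2))"
  have Zs: "summable (\<lambda>n. real (Suc n) powr (- 2))"
    using summable_tail_zeta[of 2 0] by simp
  have Z0: "Z \<ge> 0" unfolding Z_def by (rule suminf_nonneg[OF Zs]) simp
  define b where "b = 2 + max 0 (log (real (Suc N)) (Z / c + 1))"
  have b2: "b \<ge> 2" unfolding b_def by simp
  have base: "real (Suc N) > 1" using assms(1) by simp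
  have Zc: "Z / c + 1 \<le> real (Suc N) powr (b - 2)"
  proof -
    have "Z / c + 1 = real (Suc N) powr log (real (Suc N)) (Z / c + 1)"
      using base Z0 assms(2) by (subst powr_log_cancel) (auto intro: add_nonneg_pos)
    also have "\<dots> \<le> real (Suc N) powr (b - 2)"
      unfolding b_def using base by (intro powr_mono) auto
    finally show ?thesis .
  qed
  have term_le: "real (n + Suc N) powr (- b) \<le> real (Suc N) powr (2 - b) * real (Suc n) powr (- 2)" for n
  proof -
    have "real (n + Suc N) powr (- b) = real (n + Suc N) powr (2 - b) * real (n + Suc N) powr (- 2)"
      by (simp add: powr_add[symmetric])
    also have "\<dots> \<le> real (Suc N) powr (2 - b) * real (Suc n) powr (- 2)"
      using b2 by (intro mult_mono powr_mono2' powr_mono2) auto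
    finally show ?thesis .
  qed
  have "tail_zeta N b \<le> (\<Sum>n. real (Suc N) powr (2 - b) * real (Suc n) powr (- 2))"
    unfolding tail_zeta_def using term_le summable_tail_zeta[of b N] b2 Zs
    by (intro suminf_le summable_mult) auto
  also have "\<dots> = real (Suc N) powr (2 - b) * Z"
    unfolding Z_def using Zs by (rule suminf_mult)
  also have "\<dots> = Z / real (Suc N) powr (b - 2)"
    using powr_minus_divide[of "real (Suc N)" "b - 2"] by simp
  also have "\<dots> \<le> Z / (Z / c + 1)"
    using Zc Z0 assms(2) by (intro divide_left_mono) (auto intro!: mult_pos_pos add_nonneg_pos)
  also have "\<dots> \<le> c" using Z0 assms(2) by (simp add: field_simps)
  finally show ?thesis using b2 by (intro exI[of _ b]) auto
qed

text \<open>A partial sum of the divergent harmonic tail exceeds 2c; for the exponent a with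
  L^(1 - a) = 1/2, L bounding its terms, that partial sum loses at most half.\<close>
lemma tail_zeta_ge_ex:
  assumes "c > 0"
  shows "\<exists>a>1. c \<le> tail_zeta N a"
proof -
  have "\<not> summable (\<lambda>n. inverse (real (n + Suc N)))"
    using not_summable_harmonic[where 'a=real] by (subst summable_iff_shift)
  then obtain K where K: "2 * c < (\<Sum>k\<le>K. inverse (real (k + Suc N)))"
    by (metis bounded_imp_summable inverse_nonnegative_iff_nonnegative not_le of_nat_0_le_iff)
  define L where "L = real (K + N + 2)"
  have L1: "L > 1" unfolding L_def by simp
  define a where "a = 1 + ln 2 / ln L"
  have a1: "a > 1" unfolding a_def using L1 by simp
  have La: "L powr (1 - a) = 1 / 2"
    unfolding a_def powr_def using L1 by (simp add: exp_minus)
  have "c < (\<Sum>k\<le>K. inverse (real (k + Suc N)) * L powr (1 - a))"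
    using K by (simp add: La sum_divide_distrib[symmetric])
  also have "\<dots> \<le> (\<Sum>k\<le>K. real (k + Suc N) powr (- a))"
  proof (rule sum_mono)
    fix k assume "k \<in> {..K}"
    hence kL: "real (k + Suc N) \<le> L" unfolding L_def by simp
    have "real (k + Suc N) powr (- a) = real (k + Suc N) powr (- 1 + (1 - a))" by simp
    also have "\<dots> = real (k + Suc N) powr (- 1) * real (k + Suc N) powr (1 - a)"
      by (rule powr_add)
    also have "\<dots> = inverse (real (k + Suc N)) * real (k + Suc N) powr (1 - a)"
      by (simp add: powr_minus)
    also have "\<dots> \<ge> inverse (real (k + Suc N)) * L powr (1 - a)"
      using kL a1 by (intro mult_left_mono powr_mono2') auto
    finally show "inverse (real (k + Suc N)) * L powr (1 - a) \<le> real (k + Suc N) powr (- a)" .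
  qed
  also have "\<dots> \<le> tail_zeta N a"
    unfolding tail_zeta_def using summable_tail_zeta[OF a1] by (intro sum_le_suminf) auto
  finally show ?thesis using a1 by (intro exI[of _ a]) auto
qed

lemma tail_zeta_eq_ex1:
  assumes "N \<ge> 1" "c > 0"
  shows "\<exists>!s. s > 1 \<and> tail_zeta N s = c"
proof -
  obtain a where a: "a > 1" "c \<le> tail_zeta N a" using tail_zeta_ge_ex[OF assms(2)] by blast
  obtain b where b: "b > 1" "tail_zeta N b \<le> c" using tail_zeta_le_ex[OF assms] by blast
  have "tail_zeta N (max a b) \<le> c"
    using tail_zeta_strict_antimono[OF assms(1) b(1), of a] b by (cases "b < a") auto
  moreover have "continuous_on {a..max a b} (tail_zeta N)"
    using continuous_on_tail_zeta[OF a(1)] by (rule continuous_on_subset) auto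
  ultimately obtain s where s: "a \<le> s" "tail_zeta N s = c"
    using IVT2'[of "tail_zeta N" "max a b" c a] a(2) by auto
  show ?thesis
  proof (rule ex1I[of _ s])
    show "s > 1 \<and> tail_zeta N s = c" using s a by auto
    show "t = s" if "t > 1 \<and> tail_zeta N t = c" for t
      using tail_zeta_strict_antimono[OF assms(1), of t s] tail_zeta_strict_antimono[OF assms(1), of s t]
        s a that by (cases t s rule: linorder_cases) auto
  qed
qed

lemma sum_divisors_swap:
  fixes F :: "nat \<Rightarrow> nat \<Rightarrow> 'a::comm_monoid_add"
  assumes "n > 0"
  shows "(\<Sum>d | d dvd n. F (n div d) d) = (\<Sum>k | k dvd n. F k (n div k))"
  using assms by (intro sum.reindex_bij_witness[of _ "(div) n" "(div) n"]) (auto elim: dvdE)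

lemma dirichlet_inverse_1:
  assumes "f 1 = 1" "dirichlet_inverse f g"
  shows "g 1 = 1"
proof -
  have "\<forall>n\<ge>1. (\<Sum>d | d dvd n. f (n div d) * g d) = (if n = 1 then 1 else 0)"
    using assms(2) unfolding dirichlet_inverse_def .
  then have "(\<Sum>d | d dvd 1. f (1 div d) * g d) = 1" by auto
  moreover have "{d. d dvd (1::nat)} = {1}" by auto
  ultimately show ?thesis using assms(1) by simp
qed

lemma dirichlet_inverse_recurrence:
  assumes "f 1 = 1" "dirichlet_inverse f g" "n \<ge> 2"
  shows "g n = - (\<Sum>k | k dvd n \<and> k \<noteq> 1. f k * g (n div k))"
proof -
  have "0 = (\<Sum>d | d dvd n. f (n div d) * g d)"
    using assms(2,3) unfolding dirichlet_inverse_def by auto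
  also have "\<dots> = (\<Sum>k | k dvd n. f k * g (n div k))"
    using assms(3) by (intro sum_divisors_swap) auto
  also have "{k. k dvd n} = insert 1 {k. k dvd n \<and> k \<noteq> 1}" by auto
  also have "(\<Sum>k\<in>\<dots>. f k * g (n div k)) = g n + (\<Sum>k | k dvd n \<and> k \<noteq> 1. f k * g (n div k))"
    using assms(1,3) by (subst sum.insert) auto
  finally show ?thesis by linarith
qed

lemma abs_dirichlet_inverse_le:
  fixes f g :: "nat \<Rightarrow> real"
  assumes "f 1 = 1" "dirichlet_inverse f g" "N \<ge> 1" "n \<ge> 2"
    and fzero: "\<And>k. 2 \<le> k \<Longrightarrow> k \<le> N \<Longrightarrow> f k = 0"
  shows "\<bar>g n\<bar> \<le> (\<Sum>k | k dvd n \<and> N < k. \<bar>f k\<bar> * \<bar>g (n div k)\<bar>)"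
proof -
  have fin: "finite {k. k dvd n \<and> k \<noteq> 1}"
    using assms(4) by (intro finite_subset[OF _ finite_divisors_nat[of n]]) auto
  have "\<bar>g n\<bar> \<le> (\<Sum>k | k dvd n \<and> k \<noteq> 1. \<bar>f k\<bar> * \<bar>g (n div k)\<bar>)"
    unfolding dirichlet_inverse_recurrence[OF assms(1,2,4)] abs_minus_cancel
    by (rule order.trans[OF sum_abs]) (simp add: abs_mult)
  also have "\<dots> = (\<Sum>k | k dvd n \<and> N < k. \<bar>f k\<bar> * \<bar>g (n div k)\<bar>)"
  proof (rule sum.mono_neutral_right[OF fin])
    show "{k. k dvd n \<and> N < k} \<subseteq> {k. k dvd n \<and> k \<noteq> 1}" using assms(3) by auto
    show "\<forall>k\<in>{k. k dvd n \<and> k \<noteq> 1} - {k. k dvd n \<and> N < k}. \<bar>f k\<bar> * \<bar>g (n div k)\<bar> = 0"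
    proof
      fix k assume k: "k \<in> {k. k dvd n \<and> k \<noteq> 1} - {k. k dvd n \<and> N < k}"
      then have "k \<noteq> 0" using assms(4) by (intro notI) auto
      with k have "f k = 0" by (intro fzero) auto
      then show "\<bar>f k\<bar> * \<bar>g (n div k)\<bar> = 0" by simp
    qed
  qed
  finally show ?thesis .
qed

lemma powr_mult_complement:
  fixes k m :: nat and \<gamma> \<sigma> :: real
  shows "real k powr \<gamma> * real m powr (\<gamma> + \<sigma>) = real (k * m) powr (\<gamma> + \<sigma>) * real k powr (- \<sigma>)"
  by (simp add: powr_mult powr_add[symmetric] mult_ac)

lemma abs_dirichlet_inverse_le_powr:
  fixes f g :: "nat \<Rightarrow> real"
  assumes f1: "f 1 = 1" and g_inv: "dirichlet_inverse f g" and "N \<ge> 1"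
    and fzero: "\<And>k. 2 \<le> k \<Longrightarrow> k \<le> N \<Longrightarrow> f k = 0"
    and fbound: "\<And>k. k > N \<Longrightarrow> \<bar>f k\<bar> \<le> C * real k powr \<gamma>"
    and "C \<ge> 0" "\<sigma> > 1" "C * tail_zeta N \<sigma> \<le> 1"
  shows "n \<ge> 1 \<Longrightarrow> \<bar>g n\<bar> \<le> real n powr (\<gamma> + \<sigma>)"
proof (induction n rule: less_induct)
  case (less n)
  consider "n = 1" | "n \<ge> 2" using less.prems by linarith
  then show ?case
  proof cases
    case 1
    then show ?thesis using dirichlet_inverse_1[OF f1 g_inv] by simp
  next
    case 2
    let ?K = "{k. k dvd n \<and> N < k}"
    have fin: "finite ?K" using 2 by (intro finite_subset[OF _ finite_divisors_nat[of n]]) auto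
    have "\<bar>g n\<bar> \<le> (\<Sum>k\<in>?K. \<bar>f k\<bar> * \<bar>g (n div k)\<bar>)"
      using abs_dirichlet_inverse_le[OF f1 g_inv \<open>N \<ge> 1\<close> 2 fzero] .
    also have "\<dots> \<le> (\<Sum>k\<in>?K. C * (real n powr (\<gamma> + \<sigma>) * real k powr (- \<sigma>)))"
    proof (rule sum_mono)
      fix k assume "k \<in> ?K"
      then obtain m where n: "n = k * m" and k: "N < k" by blast
      have "m \<ge> 1" using 2 n by (cases m) auto
      moreover have "1 * m < k * m"
        using \<open>m \<ge> 1\<close> \<open>N \<ge> 1\<close> k by (intro mult_strict_right_mono) auto
      ultimately have "m < n" using n by simp
      with \<open>m \<ge> 1\<close> have IH: "\<bar>g m\<bar> \<le> real m powr (\<gamma> + \<sigma>)" using less.IH by blast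
      have "\<bar>f k\<bar> * \<bar>g (n div k)\<bar> \<le> C * real k powr \<gamma> * real m powr (\<gamma> + \<sigma>)"
        using fbound[OF k] IH k n by (intro mult_mono) auto
      also have "\<dots> = C * (real n powr (\<gamma> + \<sigma>) * real k powr (- \<sigma>))"
        unfolding n mult.assoc powr_mult_complement ..
      finally show "\<bar>f k\<bar> * \<bar>g (n div k)\<bar> \<le> \<dots>" .
    qed
    also have "\<dots> = real n powr (\<gamma> + \<sigma>) * (C * (\<Sum>k\<in>?K. real k powr (- \<sigma>)))"
      by (simp add: sum_distrib_left mult_ac)
    also have "\<dots> \<le> real n powr (\<gamma> + \<sigma>) * (C * tail_zeta N \<sigma>)"
      using sum_le_tail_zeta[OF \<open>\<sigma> > 1\<close> fin] \<open>C \<ge> 0\<close>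
      by (intro mult_left_mono) auto
    also have "\<dots> \<le> real n powr (\<gamma> + \<sigma>)"
      using \<open>C * tail_zeta N \<sigma> \<le> 1\<close> by (intro mult_left_le) auto
    finally show ?thesis .
  qed
qed

theorem proposition3p15:
  fixes f g :: "nat \<Rightarrow> real" and N :: nat and C \<gamma> :: real
  assumes f1: "f 1 = 1"
    and g_inv: "dirichlet_inverse f g"
    and N2: "N \<ge> 2"
    and Cpos: "C > 0"
    and fzero: "\<And>n. 2 \<le> n \<Longrightarrow> n \<le> N \<Longrightarrow> f n = 0"
    and fbound: "\<And>n. n > N \<Longrightarrow> \<bar>f n\<bar> \<le> C * real n powr \<gamma>"
  shows "(\<exists>!s. s > 1 \<and> zeta_real s = 1 / C + (\<Sum>m=1..N. real m powr (- s)))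
       \<and> (\<forall>\<sigma>. \<sigma> > 1 \<and> zeta_real \<sigma> = 1 / C + (\<Sum>m=1..N. real m powr (- \<sigma>))
            \<longrightarrow> (\<forall>n>N. \<bar>g n\<bar> \<le> real n powr (\<gamma> + \<sigma>)))"
proof -
  have N1: "N \<ge> 1" using N2 by simp
  have root_iff: "s > 1 \<and> zeta_real s = 1 / C + (\<Sum>m=1..N. real m powr (- s))
      \<longleftrightarrow> s > 1 \<and> tail_zeta N s = 1 / C" for s
    using zeta_real_split_tail[of s N] by auto
  have "\<bar>g n\<bar> \<le> real n powr (\<gamma> + \<sigma>)" if "\<sigma> > 1" "tail_zeta N \<sigma> = 1 / C" "n > N" for \<sigma> n
    using abs_dirichlet_inverse_le_powr[OF f1 g_inv N1 fzero fbound] that Cpos by simp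
  then show ?thesis
    unfolding root_iff using tail_zeta_eq_ex1[OF N1] Cpos by simp
qed

end
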